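(* Let $N\ge 1$, $p\in\,]0,2[$, $q\in[2,+\infty[$ and $(\alpha,\beta,\eta)\in\,]0,+\infty[^3$. Define $\Psi:\mathbb{R}^N\to\mathbb{R}$ by $$\Psi(\mathbf{x})=\log\left(\frac{\big(\ell_{p,\alpha}^p(\mathbf{x})+\beta^p\big)^{1/p}}{\ell_{q,\eta}(\mathbf{x})}\right),$$ where for $\mathbf{x}=(x_n)_{1\le n\le N}$, $\ell_{p,\alpha}^p(\mathbf{x})=\sum_{n=1}^N\big((x_n^2+\alpha^2)^{p/2}-\alpha^p\big)$ and $\ell_{q,\eta}(\mathbf{x})=\big(\eta^q+\sum_{n=1}^N|x_n|^q\big)^{1/q}$. Assume that either $q=2$ and $\eta^2\alpha^{p-2}>\beta^p$, or $q>2$. Then the Hessian $\nabla^2\Psi(\mathbf{0}_N)$ is a positive definite matrix and the zero vector $\mathbf{0}_N$ is a local minimizer of $\Psi$. In addition, if $$\eta^2\ \ge\ \beta^2\max\left\{\frac{8\alpha^{2-p}}{p(2+p)\beta^{2-p}},\ \frac{1}{(2^{p/2}-1)^{2/p}}\right\},$$ then $\mathbf{0}_N$ is a global minimizer of $\Psi$.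
   Context: $\Psi$ is the SPOQ (smoothed $\ell_p$-over-$\ell_q$) penalty. For $q=2$ the convention $0^0=1$ is used when computing $\nabla^2\ell_{q,\eta}^q(\mathbf{x})=q(q-1)\,\mathrm{Diag}\big((|x_n|^{q-2})_{n}\big)$ at $\mathbf{0}_N$. *)

theory Defs
  imports "HOL-Analysis.Analysis"
begin

definition lp_smooth :: "real \<Rightarrow> real \<Rightarrow> real^'n \<Rightarrow> real" where
  "lp_smooth p \<alpha> x = (\<Sum>n\<in>UNIV. ((x $ n)\<^sup>2 + \<alpha>\<^sup>2) powr (p / 2) - \<alpha> powr p)"

definition lq_smooth :: "real \<Rightarrow> real \<Rightarrow> real^'n \<Rightarrow> real" where
  "lq_smooth q \<eta> x = (\<eta> powr q + (\<Sum>n\<in>UNIV. \<bar>x $ n\<bar> powr q)) powr (1 / q)"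

definition SPOQ :: "real \<Rightarrow> real \<Rightarrow> real \<Rightarrow> real \<Rightarrow> real \<Rightarrow> real^'n \<Rightarrow> real" where
  "SPOQ p q \<alpha> \<beta> \<eta> x =
     ln ((lp_smooth p \<alpha> x + \<beta> powr p) powr (1 / p) / lq_smooth q \<eta> x)"

definition partial_deriv :: "(real^'n \<Rightarrow> real) \<Rightarrow> 'n \<Rightarrow> real^'n \<Rightarrow> real" where
  "partial_deriv f j y = frechet_derivative f (at y) (axis j 1)"

definition twice_differentiable_at :: "(real^'n \<Rightarrow> real) \<Rightarrow> real^'n \<Rightarrow> bool" where
  "twice_differentiable_at f x \<longleftrightarrow>
     (\<exists>e>0. \<forall>y\<in>ball x e. f differentiable (at y)) \<and>
     (\<forall>j. partial_deriv f j differentiable (at x))"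

definition hessian :: "(real^'n \<Rightarrow> real) \<Rightarrow> real^'n \<Rightarrow> real^'n^'n" where
  "hessian f x = (\<chi> i j. frechet_derivative (partial_deriv f j) (at x) (axis i 1))"

definition pos_def_matrix :: "real^'n^'n \<Rightarrow> bool" where
  "pos_def_matrix H \<longleftrightarrow> transpose H = H \<and> (\<forall>v. v \<noteq> 0 \<longrightarrow> v \<bullet> (H *v v) > 0)"

end

(*
  Write the penalty as ln (spoq_num x) / p - ln (spoq_den x) / q with
  spoq_num = lp_smooth + beta^p and spoq_den = eta^q + sum_n |x_n|^q.  Both are smooth and
  even in every coordinate, so the gradient vanishes at 0, and the Hessian there is the
  multiple alpha^(p-2) / beta^p - [q = 2] / eta^2 of the identity, which the hypothesis
  makes positive.

  Local minimality is shown directly: by ln u <= u - 1 it suffices that the relative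
  increment of the denominator, of order |x|^q, is dominated by that of the numerator, which
  is at least of order |x|^2 / (|x|^2 + alpha^2).  For q = 2 this is the hypothesis on eta,
  for q > 2 it holds on a small ball.

  For global minimality every coordinate satisfies x_n^2 / M <= (beta^p + lp_term x_n)^(2/p)
  - beta^2, where M is the maximum in the hypothesis (tangent lines for |x_n| <= alpha,
  concavity of y^(p/2) otherwise).  The increments of the convex function y^(2/p) are
  superadditive, which sums these bounds, and lq_smooth <= sqrt (eta^2 + |x|^2) for q >= 2
  then yields beta * lq_smooth x <= eta * spoq_num x^(1/p).
*)
theory Submission
  imports Defs
begin

section \<open>Inequalities for real powers\<close>

lemma convex_on_increments_superadditive:
  fixes f :: "real \<Rightarrow> real"
  assumes f: "convex_on I f" and I: "c \<in> I" "c + a + b \<in> I" and ab: "0 \<le> a" "0 \<le> b"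
  shows "f (c + a) + f (c + b) \<le> f c + f (c + a + b)"
proof (cases "a + b = 0")
  case True
  then have "a = 0" "b = 0" using ab by linarith+
  then show ?thesis by simp
next
  case False
  define \<mu> where "\<mu> = b / (a + b)"
  have \<mu>: "0 \<le> \<mu>" "\<mu> \<le> 1" using ab False by (auto simp: \<mu>_def field_simps)
  have weights: "(1 - \<mu>) * (a + b) = a" "\<mu> * (a + b) = b"
    using False by (simp_all add: \<mu>_def field_simps)
  have ca: "c + a = \<mu> * c + (1 - \<mu>) * (c + a + b)"
    using weights(1) by (simp add: algebra_simps)
  have cb: "c + b = (1 - \<mu>) * c + \<mu> * (c + a + b)"
    using weights(2) by (simp add: algebra_simps)
  have "f (\<mu> * c + (1 - \<mu>) * (c + a + b)) \<le> \<mu> * f c + (1 - \<mu>) * f (c + a + b)"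
    using convex_onD[OF f, of "1 - \<mu>" c "c + a + b"] \<mu> I by simp
  then have "f (c + a) \<le> \<mu> * f c + (1 - \<mu>) * f (c + a + b)"
    by (simp only: ca[symmetric])
  moreover have "f ((1 - \<mu>) * c + \<mu> * (c + a + b)) \<le> (1 - \<mu>) * f c + \<mu> * f (c + a + b)"
    using convex_onD[OF f, of \<mu> c "c + a + b"] \<mu> I by simp
  then have "f (c + b) \<le> (1 - \<mu>) * f c + \<mu> * f (c + a + b)"
    by (simp only: cb[symmetric])
  ultimately show ?thesis by (simp add: algebra_simps)
qed

lemma convex_on_sum_increments_le:
  fixes f :: "real \<Rightarrow> real" and g :: "'a \<Rightarrow> real"
  assumes f: "convex_on {c..} f" and "finite A" and g: "\<And>i. i \<in> A \<Longrightarrow> 0 \<le> g i"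
  shows "(\<Sum>i\<in>A. f (c + g i) - f c) \<le> f (c + (\<Sum>i\<in>A. g i)) - f c"
  using \<open>finite A\<close> g
proof (induction A rule: finite_induct)
  case (insert i A)
  have "(\<Sum>j\<in>insert i A. f (c + g j) - f c) \<le> (f (c + g i) - f c) + (f (c + (\<Sum>j\<in>A. g j)) - f c)"
    using insert by simp
  also have "\<dots> \<le> f (c + (g i + (\<Sum>j\<in>A. g j))) - f c"
    using convex_on_increments_superadditive[OF f, of c "g i" "\<Sum>j\<in>A. g j"] insert.prems
    by (simp add: sum_nonneg add.assoc)
  finally show ?case using insert by simp
qed simp

lemma concave_on_powr:
  assumes "0 \<le> h" "h \<le> 1"
  shows "concave_on {0<..} (\<lambda>x::real. x powr h)"
proof (rule f''_le0_imp_concave[where f' = "\<lambda>x. h * x powr (h - 1)"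
                                   and f'' = "\<lambda>x. h * ((h - 1) * x powr (h - 2))"])
  fix x :: real
  assume x: "x \<in> {0<..}"
  show "((\<lambda>x. x powr h) has_real_derivative h * x powr (h - 1)) (at x)"
    using x by (auto intro!: derivative_eq_intros)
  show "((\<lambda>x. h * x powr (h - 1)) has_real_derivative h * ((h - 1) * x powr (h - 2))) (at x)"
    using x by (auto intro!: derivative_eq_intros simp: algebra_simps)
  show "h * ((h - 1) * x powr (h - 2)) \<le> 0"
    using assms by (simp add: mult_nonneg_nonpos mult_nonpos_nonneg)
qed simp

lemma powr_le_tangent:
  fixes a b h :: real
  assumes "0 \<le> h" "h \<le> 1" "0 < a" "0 < b"
  shows "a powr h \<le> b powr h + h * b powr (h - 1) * (a - b)"
proof -
  have convex: "convex_on {0<..} (\<lambda>x::real. - (x powr h))"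
    using concave_on_powr[OF assms(1,2)] by (simp add: concave_on_def)
  have deriv: "((\<lambda>x. - (x powr h)) has_field_derivative - (h * b powr (h - 1))) (at b within {0<..})"
    using assms by (auto intro!: derivative_eq_intros)
  have "- (h * b powr (h - 1)) * (a - b) \<le> - (a powr h) - - (b powr h)"
    by (rule convex_on_imp_above_tangent[OF convex _ _ _ deriv]) (use assms in \<open>auto simp: interior_open\<close>)
  then show ?thesis by (simp add: algebra_simps)
qed

lemma powr_ge_tangent:
  fixes a b r :: real
  assumes "1 \<le> r" "0 < a" "0 < b"
  shows "b powr r + r * b powr (r - 1) * (a - b) \<le> a powr r"
proof -
  have deriv: "((\<lambda>x. x powr r) has_field_derivative r * b powr (r - 1)) (at b within {0<..})"
    using assms by (auto intro!: derivative_eq_intros)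
  have "r * b powr (r - 1) * (a - b) \<le> a powr r - b powr r"
    by (rule convex_on_imp_above_tangent[OF powr_convex[OF assms(1)] _ _ _ deriv])
      (use assms in \<open>auto simp: interior_open\<close>)
  then show ?thesis by (simp add: algebra_simps)
qed

lemma powr_add_ge_add_powr:
  fixes x y r :: real
  assumes "1 \<le> r" "0 \<le> x" "0 \<le> y"
  shows "x powr r + y powr r \<le> (x + y) powr r"
proof (cases "x = 0 \<or> y = 0")
  case False
  then have "0 < x" "0 < y" using assms by auto
  then have "x powr r + y powr r = x * x powr (r - 1) + y * y powr (r - 1)"
    by (simp add: powr_diff)
  also have "\<dots> \<le> x * (x + y) powr (r - 1) + y * (x + y) powr (r - 1)"
    using \<open>0 < x\<close> \<open>0 < y\<close> assms(1) by (intro add_mono mult_left_mono powr_mono2) auto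
  also have "\<dots> = (x + y) powr r"
    using powr_add[of "x + y" 1 "r - 1"] \<open>0 < x\<close> \<open>0 < y\<close> by (simp add: algebra_simps)
  finally show ?thesis .
qed auto

lemma powr_increment_ge:
  fixes h u v :: real
  assumes "0 \<le> h" "h \<le> 1" "0 < v" "v \<le> u"
  shows "(2 powr h - 1) * u powr h \<le> (u + v) powr h - v powr h"
proof -
  have "convex_on {0<..} (\<lambda>x::real. - (x powr h))"
    using concave_on_powr[OF assms(1,2)] by (simp add: concave_on_def)
  from convex_on_increments_superadditive[OF this, of v "u - v" u]
  have "(2 * u) powr h - u powr h \<le> (u + v) powr h - v powr h"
    using assms by (simp add: algebra_simps mult_2)
  then show ?thesis by (simp add: powr_mult algebra_simps)
qed

lemma two_powr_ge:
  fixes h :: real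
  assumes "0 \<le> h" "h \<le> 1"
  shows "h * (1 + h) \<le> 2 powr h"
proof -
  define d where "d = 1 - h"
  have "ln 2 \<le> (1::real)" using ln_le_minus_one[of 2] by simp
  then have "h * (1 + h) \<le> 2 * (1 - d * ln 2)"
    using assms mult_nonneg_nonneg[of d "3 - 2 * ln 2 - d"]
    by (simp add: d_def algebra_simps power2_eq_square)
  also have "\<dots> \<le> 2 * exp (- d * ln 2)"
    using exp_ge_add_one_self[of "- d * ln 2"] by simp
  also have "\<dots> = 2 powr h"
    by (simp add: d_def powr_def exp_diff algebra_simps)
  finally show ?thesis .
qed

lemma power2_powr:
  assumes "0 < (a::real)"
  shows "(a\<^sup>2) powr e = a powr (2 * e)"
proof -
  have "(a\<^sup>2) powr e = (a powr 2) powr e" using assms by (simp add: powr_numeral)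
  then show ?thesis by (simp add: powr_powr)
qed

lemma abs_powr_eq_power2_powr: "\<bar>y::real\<bar> powr q = (y\<^sup>2) powr (q / 2)"
proof (cases "y = 0")
  case False
  then have "0 < \<bar>y\<bar>" by simp
  from power2_powr[OF this, of "q / 2"] show ?thesis by simp
qed simp

lemma abs_powr_le_power2_mult:
  fixes y \<rho> q :: real
  assumes "\<bar>y\<bar> \<le> \<rho>" "2 \<le> q"
  shows "\<bar>y\<bar> powr q \<le> y\<^sup>2 * \<rho> powr (q - 2)"
proof (cases "y = 0")
  case False
  then have "\<bar>y\<bar> powr q = y\<^sup>2 * \<bar>y\<bar> powr (q - 2)"
    using powr_add[of "\<bar>y\<bar>" 2 "q - 2"] by (simp add: powr_numeral)
  also have "\<dots> \<le> y\<^sup>2 * \<rho> powr (q - 2)"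
    using assms by (intro mult_left_mono powr_mono2) auto
  finally show ?thesis .
qed simp

section \<open>The one-dimensional term of the smoothed quasi-norm\<close>

definition lp_term :: "real \<Rightarrow> real \<Rightarrow> real \<Rightarrow> real" where
  "lp_term p \<alpha> t = (t\<^sup>2 + \<alpha>\<^sup>2) powr (p / 2) - \<alpha> powr p"

lemma lp_term_zero [simp]: "0 < \<alpha> \<Longrightarrow> lp_term p \<alpha> 0 = 0"
  by (simp add: lp_term_def power2_powr)

lemma lp_term_nonneg:
  assumes "0 \<le> p" "0 < \<alpha>"
  shows "0 \<le> lp_term p \<alpha> t"
proof -
  have "(\<alpha>\<^sup>2) powr (p / 2) \<le> (t\<^sup>2 + \<alpha>\<^sup>2) powr (p / 2)"
    using assms by (intro powr_mono2) auto
  then show ?thesis using assms by (simp add: lp_term_def power2_powr)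
qed

lemma lp_term_ge_tangent:
  assumes "0 \<le> p" "p \<le> 2" "0 < \<alpha>"
  shows "p / 2 * (t\<^sup>2 + \<alpha>\<^sup>2) powr (p / 2 - 1) * t\<^sup>2 \<le> lp_term p \<alpha> t"
proof -
  have "(\<alpha>\<^sup>2) powr (p / 2) \<le> (t\<^sup>2 + \<alpha>\<^sup>2) powr (p / 2) + p / 2 * (t\<^sup>2 + \<alpha>\<^sup>2) powr (p / 2 - 1) * (\<alpha>\<^sup>2 - (t\<^sup>2 + \<alpha>\<^sup>2))"
    using assms by (intro powr_le_tangent) (auto simp: add_nonneg_pos)
  then show ?thesis using assms by (simp add: lp_term_def power2_powr algebra_simps)
qed

lemma lp_term_ge_rational:
  assumes "0 \<le> p" "p \<le> 2" "0 < \<alpha>"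
  shows "p / 2 * \<alpha> powr p * t\<^sup>2 / (t\<^sup>2 + \<alpha>\<^sup>2) \<le> lp_term p \<alpha> t"
proof -
  have pos: "0 < t\<^sup>2 + \<alpha>\<^sup>2" using assms by (simp add: add_nonneg_pos)
  have "\<alpha> powr p \<le> (t\<^sup>2 + \<alpha>\<^sup>2) powr (p / 2)"
    using powr_mono2[of "p / 2" "\<alpha>\<^sup>2" "t\<^sup>2 + \<alpha>\<^sup>2"] assms by (simp add: power2_powr)
  then have "p / 2 * \<alpha> powr p * t\<^sup>2 / (t\<^sup>2 + \<alpha>\<^sup>2) \<le> p / 2 * ((t\<^sup>2 + \<alpha>\<^sup>2) powr (p / 2) / (t\<^sup>2 + \<alpha>\<^sup>2)) * t\<^sup>2"
    using assms pos by (simp add: divide_right_mono mult_right_mono mult_left_mono)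
  also have "\<dots> = p / 2 * (t\<^sup>2 + \<alpha>\<^sup>2) powr (p / 2 - 1) * t\<^sup>2"
    using pos by (simp add: powr_diff)
  also have "\<dots> \<le> lp_term p \<alpha> t"
    by (rule lp_term_ge_tangent[OF assms])
  finally show ?thesis .
qed

text \<open>The constant \<open>8 / (p * (2 + p))\<close> comes from \<open>2 powr h \<ge> h * (1 + h)\<close> for
  \<open>h = p / 2\<close>, after comparing both sides through tangent lines.\<close>
lemma lp_term_bound_small:
  assumes p: "0 < p" "p \<le> 2" and pos: "0 < \<alpha>" "0 < \<beta>" and t: "t\<^sup>2 \<le> \<alpha>\<^sup>2"
  shows "t\<^sup>2 / (8 * \<alpha> powr (2 - p) / (p * (2 + p) * \<beta> powr (2 - p)))
           \<le> (\<beta> powr p + lp_term p \<alpha> t) powr (2 / p) - \<beta>\<^sup>2"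
proof -
  define h where "h = p / 2"
  define g where "g = lp_term p \<alpha> t"
  have h: "0 < h" "h \<le> 1" using p by (auto simp: h_def)
  have g: "0 \<le> g" using lp_term_nonneg[of p \<alpha> t] p pos by (simp add: g_def)
  have "(\<beta> powr p) powr (2 / p) + 2 / p * (\<beta> powr p) powr (2 / p - 1) * (\<beta> powr p + g - \<beta> powr p)
          \<le> (\<beta> powr p + g) powr (2 / p)"
    using p pos g by (intro powr_ge_tangent) (auto intro: add_pos_nonneg)
  moreover have "(\<beta> powr p) powr (2 / p - 1) = \<beta> powr (2 - p)" "(\<beta> powr p) powr (2 / p) = \<beta>\<^sup>2"
    using p pos by (simp_all add: powr_powr algebra_simps powr_numeral)
  ultimately have upper: "2 / p * \<beta> powr (2 - p) * g \<le> (\<beta> powr p + g) powr (2 / p) - \<beta>\<^sup>2"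
    by simp
  have "h * (1 + h) / 2 * \<alpha> powr (p - 2) \<le> 2 powr h / 2 * \<alpha> powr (p - 2)"
    using two_powr_ge[of h] h by (intro mult_right_mono divide_right_mono) auto
  also have "\<dots> = (2 * \<alpha>\<^sup>2) powr (h - 1)"
    using pos by (simp add: powr_mult power2_powr h_def powr_diff algebra_simps)
  also have "\<dots> \<le> (t\<^sup>2 + \<alpha>\<^sup>2) powr (h - 1)"
    using t h pos by (intro powr_mono2') (auto simp: add_nonneg_pos)
  finally have "h * (1 + h) / 2 * \<alpha> powr (p - 2) \<le> (t\<^sup>2 + \<alpha>\<^sup>2) powr (h - 1)" .
  then have "h * (h * (1 + h) / 2 * \<alpha> powr (p - 2)) * t\<^sup>2 \<le> h * (t\<^sup>2 + \<alpha>\<^sup>2) powr (h - 1) * t\<^sup>2"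
    using h by (intro mult_right_mono mult_left_mono) auto
  also have "\<dots> \<le> g"
    using lp_term_ge_tangent[of p \<alpha> t] p pos by (simp add: g_def h_def)
  finally have lower: "h * (h * (1 + h) / 2 * \<alpha> powr (p - 2)) * t\<^sup>2 \<le> g" .
  have "t\<^sup>2 / (8 * \<alpha> powr (2 - p) / (p * (2 + p) * \<beta> powr (2 - p)))
          = 2 / p * \<beta> powr (2 - p) * (h * (h * (1 + h) / 2 * \<alpha> powr (p - 2)) * t\<^sup>2)"
    using p pos by (simp add: h_def powr_diff field_simps)
  also have "\<dots> \<le> 2 / p * \<beta> powr (2 - p) * g"
    using lower p by (intro mult_left_mono) auto
  finally show ?thesis using upper by (simp add: g_def)
qed

text \<open>Here concavity of \<open>y powr (p / 2)\<close> gives \<open>lp_term p \<alpha> t \<ge> (2 powr (p / 2) - 1) * \<bar>t\<bar> powr p\<close>.\<close>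
lemma lp_term_bound_large:
  assumes p: "0 < p" "p \<le> 2" and pos: "0 < \<alpha>" "0 < \<beta>" and t: "\<alpha>\<^sup>2 \<le> t\<^sup>2"
  shows "t\<^sup>2 / (1 / (2 powr (p / 2) - 1) powr (2 / p))
           \<le> (\<beta> powr p + lp_term p \<alpha> t) powr (2 / p) - \<beta>\<^sup>2"
proof -
  define h where "h = p / 2"
  define g where "g = lp_term p \<alpha> t"
  have h: "0 < h" "h \<le> 1" and h2: "1 < 2 powr h" using p by (auto simp: h_def)
  have g: "0 \<le> g" using lp_term_nonneg[of p \<alpha> t] p pos by (simp add: g_def)
  have "(2 powr h - 1) * (t\<^sup>2) powr h \<le> (t\<^sup>2 + \<alpha>\<^sup>2) powr h - (\<alpha>\<^sup>2) powr h"
    using h pos t by (intro powr_increment_ge) auto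
  then have "(2 powr h - 1) * (t\<^sup>2) powr h \<le> g"
    using pos by (simp add: g_def lp_term_def h_def power2_powr)
  then have "((2 powr h - 1) * (t\<^sup>2) powr h) powr (2 / p) \<le> g powr (2 / p)"
    using h2 p by (intro powr_mono2) auto
  moreover have "((2 powr h - 1) * (t\<^sup>2) powr h) powr (2 / p) = t\<^sup>2 / (1 / (2 powr h - 1) powr (2 / p))"
    using h2 p by (simp add: powr_mult powr_powr h_def powr_numeral)
  moreover have "(\<beta> powr p) powr (2 / p) + g powr (2 / p) \<le> (\<beta> powr p + g) powr (2 / p)"
    using p g by (intro powr_add_ge_add_powr) auto
  moreover have "(\<beta> powr p) powr (2 / p) = \<beta>\<^sup>2"
    using p pos by (simp add: powr_powr powr_numeral)
  ultimately show ?thesis by (simp add: g_def h_def)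
qed

lemma lp_term_bound:
  assumes "0 < p" "p \<le> 2" "0 < \<alpha>" "0 < \<beta>"
  shows "t\<^sup>2 / max (8 * \<alpha> powr (2 - p) / (p * (2 + p) * \<beta> powr (2 - p)))
                   (1 / (2 powr (p / 2) - 1) powr (2 / p))
           \<le> (\<beta> powr p + lp_term p \<alpha> t) powr (2 / p) - \<beta>\<^sup>2"
proof -
  define A where "A = 8 * \<alpha> powr (2 - p) / (p * (2 + p) * \<beta> powr (2 - p))"
  define B where "B = 1 / (2 powr (p / 2) - 1) powr (2 / p)"
  have "0 < A" "0 < B" using assms by (auto simp: A_def B_def)
  show ?thesis
  proof (cases "t\<^sup>2 \<le> \<alpha>\<^sup>2")
    case True
    have "t\<^sup>2 / max A B \<le> t\<^sup>2 / A" using \<open>0 < A\<close> by (intro divide_left_mono) auto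
    then show ?thesis using lp_term_bound_small[OF assms True] unfolding A_def B_def by linarith
  next
    case False
    then have large: "\<alpha>\<^sup>2 \<le> t\<^sup>2" by simp
    have "t\<^sup>2 / max A B \<le> t\<^sup>2 / B" using \<open>0 < B\<close> by (intro divide_left_mono) auto
    then show ?thesis using lp_term_bound_large[OF assms large] unfolding A_def B_def by linarith
  qed
qed

lemma lp_smooth_eq_sum_lp_term: "lp_smooth p \<alpha> x = (\<Sum>n\<in>UNIV. lp_term p \<alpha> (x $ n))"
  by (simp add: lp_smooth_def lp_term_def)

lemma lp_smooth_nonneg: "0 \<le> p \<Longrightarrow> 0 < \<alpha> \<Longrightarrow> 0 \<le> lp_smooth p \<alpha> x"
  unfolding lp_smooth_eq_sum_lp_term by (intro sum_nonneg lp_term_nonneg)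

lemma lp_smooth_zero [simp]: "0 < \<alpha> \<Longrightarrow> lp_smooth p \<alpha> 0 = 0"
  by (simp add: lp_smooth_eq_sum_lp_term)

lemma lq_smooth_zero [simp]: "0 < \<eta> \<Longrightarrow> q \<noteq> 0 \<Longrightarrow> lq_smooth q \<eta> 0 = \<eta>"
  by (simp add: lq_smooth_def powr_powr)

lemma norm_power2_eq_sum: "(norm (x::real^'n))\<^sup>2 = (\<Sum>n\<in>UNIV. (x $ n)\<^sup>2)"
  unfolding power2_norm_eq_inner inner_vec_def by (simp add: power2_eq_square)

lemma powr_le_mult_powr:
  fixes a T e :: real
  assumes "0 \<le> a" "a \<le> T" "1 \<le> e"
  shows "a powr e \<le> a * T powr (e - 1)"
proof (cases "a = 0")
  case False
  then have "a powr e = a * a powr (e - 1)" using assms powr_add[of a 1 "e - 1"] by simp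
  also have "\<dots> \<le> a * T powr (e - 1)" using assms by (intro mult_left_mono powr_mono2) auto
  finally show ?thesis .
qed simp

lemma lq_smooth_le_sqrt:
  assumes "2 \<le> q" "0 < \<eta>"
  shows "lq_smooth q \<eta> x \<le> sqrt (\<eta>\<^sup>2 + (norm x)\<^sup>2)"
proof -
  define T where "T = \<eta>\<^sup>2 + (\<Sum>n\<in>UNIV. (x $ n)\<^sup>2)"
  have "0 < T" using assms by (simp add: T_def add_pos_nonneg sum_nonneg)
  have le_T: "(x $ n)\<^sup>2 \<le> T" for n
    using member_le_sum[of n UNIV "\<lambda>n. (x $ n)\<^sup>2"] by (simp add: T_def add_increasing)
  have e: "1 \<le> q / 2" using assms by simp
  have "\<eta> powr q + (\<Sum>n\<in>UNIV. \<bar>x $ n\<bar> powr q)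
          = (\<eta>\<^sup>2) powr (q / 2) + (\<Sum>n\<in>UNIV. ((x $ n)\<^sup>2) powr (q / 2))"
    using abs_powr_eq_power2_powr[of \<eta> q] assms by (simp add: abs_powr_eq_power2_powr)
  also have "\<dots> \<le> \<eta>\<^sup>2 * T powr (q / 2 - 1) + (\<Sum>n\<in>UNIV. (x $ n)\<^sup>2 * T powr (q / 2 - 1))"
    using e le_T by (intro add_mono sum_mono powr_le_mult_powr) (auto simp: T_def sum_nonneg)
  also have "\<dots> = T powr (q / 2)"
    using \<open>0 < T\<close> powr_add[of T 1 "q / 2 - 1"] by (simp add: T_def sum_distrib_right algebra_simps)
  finally have "lq_smooth q \<eta> x \<le> (T powr (q / 2)) powr (1 / q)"
    unfolding lq_smooth_def using assms by (intro powr_mono2) (auto intro!: add_nonneg_nonneg sum_nonneg)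
  also have "\<dots> = sqrt T" using assms \<open>0 < T\<close> by (simp add: powr_powr powr_half_sqrt)
  finally show ?thesis by (simp add: T_def norm_power2_eq_sum)
qed

definition spoq_num :: "real \<Rightarrow> real \<Rightarrow> real \<Rightarrow> real^'n \<Rightarrow> real" where
  "spoq_num p \<alpha> \<beta> x = lp_smooth p \<alpha> x + \<beta> powr p"

definition spoq_den :: "real \<Rightarrow> real \<Rightarrow> real^'n \<Rightarrow> real" where
  "spoq_den q \<eta> x = \<eta> powr q + (\<Sum>n\<in>UNIV. \<bar>x $ n\<bar> powr q)"

lemma spoq_num_pos: "0 \<le> p \<Longrightarrow> 0 < \<alpha> \<Longrightarrow> 0 < \<beta> \<Longrightarrow> 0 < spoq_num p \<alpha> \<beta> x"
  using lp_smooth_nonneg[of p \<alpha> x] by (simp add: spoq_num_def add_nonneg_pos)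

lemma spoq_den_pos: "0 < \<eta> \<Longrightarrow> 0 < spoq_den q \<eta> x"
  by (simp add: spoq_den_def add_pos_nonneg sum_nonneg)

lemma SPOQ_eq_ln:
  assumes "0 \<le> p" "0 < \<alpha>" "0 < \<beta>" "0 < \<eta>"
  shows "SPOQ p q \<alpha> \<beta> \<eta> x = ln (spoq_num p \<alpha> \<beta> x) / p - ln (spoq_den q \<eta> x) / q"
  using spoq_num_pos[OF assms(1-3), of x] spoq_den_pos[OF assms(4), of q x]
  by (simp add: SPOQ_def lq_smooth_def ln_div ln_powr flip: spoq_num_def spoq_den_def)

lemma SPOQ_zero:
  assumes "0 < p" "0 < q" "0 < \<alpha>" "0 < \<beta>" "0 < \<eta>"
  shows "SPOQ p q \<alpha> \<beta> \<eta> 0 = ln (\<beta> / \<eta>)"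
  using assms by (simp add: SPOQ_def powr_powr)

section \<open>Global minimality\<close>

lemma norm_power2_le_spoq_num:
  assumes "0 < p" "p \<le> 2" "0 < \<alpha>" "0 < \<beta>"
  shows "(norm x)\<^sup>2 / max (8 * \<alpha> powr (2 - p) / (p * (2 + p) * \<beta> powr (2 - p)))
                           (1 / (2 powr (p / 2) - 1) powr (2 / p))
           \<le> spoq_num p \<alpha> \<beta> x powr (2 / p) - \<beta>\<^sup>2"
proof -
  define M where "M = max (8 * \<alpha> powr (2 - p) / (p * (2 + p) * \<beta> powr (2 - p)))
                          (1 / (2 powr (p / 2) - 1) powr (2 / p))"
  have "0 < \<beta> powr p" using assms by simp
  then have "{\<beta> powr p..} \<subseteq> {0<..}"
    by (meson atLeast_iff greaterThan_iff less_le_trans subsetI)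
  then have convex: "convex_on {\<beta> powr p..} (\<lambda>y. y powr (2 / p))"
    using assms by (intro convex_on_subset[OF powr_convex]) auto
  have \<beta>2: "(\<beta> powr p) powr (2 / p) = \<beta>\<^sup>2"
    using assms by (simp add: powr_powr powr_numeral)
  have "(norm x)\<^sup>2 / M = (\<Sum>n\<in>UNIV. (x $ n)\<^sup>2 / M)"
    by (simp add: norm_power2_eq_sum sum_divide_distrib)
  also have "\<dots> \<le> (\<Sum>n\<in>UNIV. (\<beta> powr p + lp_term p \<alpha> (x $ n)) powr (2 / p) - \<beta>\<^sup>2)"
    using lp_term_bound[OF assms] by (intro sum_mono) (simp add: M_def)
  also have "\<dots> \<le> (\<beta> powr p + lp_smooth p \<alpha> x) powr (2 / p) - \<beta>\<^sup>2"
    using convex_on_sum_increments_le[OF convex, of UNIV "\<lambda>n. lp_term p \<alpha> (x $ n)"]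
      lp_term_nonneg assms by (simp add: \<beta>2 lp_smooth_eq_sum_lp_term)
  finally show ?thesis by (simp add: M_def spoq_num_def add.commute)
qed

lemma SPOQ_global_min:
  assumes p: "0 < p" "p \<le> 2" and q: "2 \<le> q" and pos: "0 < \<alpha>" "0 < \<beta>" "0 < \<eta>"
    and \<eta>: "\<eta>\<^sup>2 \<ge> \<beta>\<^sup>2 * max (8 * \<alpha> powr (2 - p) / (p * (2 + p) * \<beta> powr (2 - p)))
                             (1 / (2 powr (p / 2) - 1) powr (2 / p))"
  shows "ln (\<beta> / \<eta>) \<le> SPOQ p q \<alpha> \<beta> \<eta> x"
proof -
  define M where "M = max (8 * \<alpha> powr (2 - p) / (p * (2 + p) * \<beta> powr (2 - p)))
                          (1 / (2 powr (p / 2) - 1) powr (2 / p))"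
  define P where "P = spoq_num p \<alpha> \<beta> x powr (1 / p)"
  define Q where "Q = lq_smooth q \<eta> x"
  have "0 < M" using p pos by (simp add: M_def less_max_iff_disj)
  have "0 < P" using spoq_num_pos[of p \<alpha> \<beta> x] p pos by (simp add: P_def)
  have "0 < Q" using spoq_den_pos[OF pos(3), of q x] by (simp add: Q_def lq_smooth_def spoq_den_def)
  have P2: "P\<^sup>2 = spoq_num p \<alpha> \<beta> x powr (2 / p)"
    using \<open>0 < P\<close> by (simp add: P_def powr_powr flip: powr_numeral)
  have "\<beta>\<^sup>2 * (norm x)\<^sup>2 \<le> \<eta>\<^sup>2 * ((norm x)\<^sup>2 / M)"
    using \<eta> \<open>0 < M\<close> mult_right_mono[of "\<beta>\<^sup>2 * M" "\<eta>\<^sup>2" "(norm x)\<^sup>2"]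
    by (simp add: M_def field_simps)
  also have "\<dots> \<le> \<eta>\<^sup>2 * (P\<^sup>2 - \<beta>\<^sup>2)"
    using norm_power2_le_spoq_num[OF p pos(1,2), of x] by (intro mult_left_mono) (simp_all add: M_def P2)
  finally have "\<beta>\<^sup>2 * (\<eta>\<^sup>2 + (norm x)\<^sup>2) \<le> (\<eta> * P)\<^sup>2"
    by (simp add: power_mult_distrib algebra_simps)
  then have "sqrt (\<beta>\<^sup>2 * (\<eta>\<^sup>2 + (norm x)\<^sup>2)) \<le> \<eta> * P"
    using pos \<open>0 < P\<close> real_sqrt_le_mono by fastforce
  then have "\<beta> * Q \<le> \<eta> * P"
    using lq_smooth_le_sqrt[OF q pos(3), of x] pos(2)
    by (simp add: Q_def real_sqrt_mult) (meson mult_left_mono order_trans less_imp_le)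
  then have "\<beta> / \<eta> \<le> P / Q" using pos \<open>0 < Q\<close> by (simp add: field_simps)
  then have "ln (\<beta> / \<eta>) \<le> ln (P / Q)" using pos by (intro ln_mono) auto
  also have "\<dots> = SPOQ p q \<alpha> \<beta> \<eta> x" by (simp add: SPOQ_def P_def Q_def spoq_num_def add.commute)
  finally show ?thesis .
qed

section \<open>Local minimality\<close>

lemma ln_div_diff_le:
  fixes L S b n p q :: real
  assumes "0 \<le> L" "0 \<le> S" "0 < b" "0 < n" "0 < p" "0 < q"
    and "S / (q * n) \<le> L / (p * (b + L))"
  shows "ln b / p - ln n / q \<le> ln (b + L) / p - ln (n + S) / q"
proof -
  have "ln (b / (b + L)) \<le> b / (b + L) - 1" using assms by (intro ln_le_minus_one) auto
  then have lower: "L / (b + L) \<le> ln (b + L) - ln b"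
    using assms by (simp add: ln_div field_simps)
  have "ln ((n + S) / n) \<le> (n + S) / n - 1" using assms by (intro ln_le_minus_one) auto
  then have upper: "ln (n + S) - ln n \<le> S / n"
    using assms by (simp add: ln_div field_simps)
  have "(ln (n + S) - ln n) / q \<le> (S / n) / q"
    using upper assms by (intro divide_right_mono) auto
  also have "\<dots> \<le> L / (p * (b + L))" using assms by (simp add: mult.commute)
  also have "\<dots> = (L / (b + L)) / p" by simp
  also have "\<dots> \<le> (ln (b + L) - ln b) / p"
    using lower assms by (intro divide_right_mono) auto
  finally show ?thesis by (simp add: diff_divide_distrib)
qed

lemma div_mult_add_self_mono:
  fixes u L b p :: real
  assumes "0 \<le> u" "u \<le> L" "0 < b" "0 < p"
  shows "u / (p * (b + u)) \<le> L / (p * (b + L))"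
proof -
  have "p * (u * b) \<le> p * (L * b)" using assms by (intro mult_left_mono mult_right_mono) auto
  then have "u * (p * (b + L)) \<le> L * (p * (b + u))" by (simp add: algebra_simps)
  then show ?thesis using assms by (simp add: divide_simps add_pos_nonneg)
qed

lemma lp_smooth_ge_rational:
  fixes x :: "real^'n"
  assumes "0 \<le> p" "p \<le> 2" "0 < \<alpha>"
  shows "p / 2 * \<alpha> powr p * (norm x)\<^sup>2 / ((norm x)\<^sup>2 + \<alpha>\<^sup>2) \<le> lp_smooth p \<alpha> x"
proof -
  define R where "R = (norm x)\<^sup>2"
  have "0 \<le> R" by (simp add: R_def)
  have le_R: "(x $ n)\<^sup>2 \<le> R" for n
    using member_le_sum[of n UNIV "\<lambda>n. (x $ n)\<^sup>2"] by (simp add: R_def norm_power2_eq_sum)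
  have "p / 2 * \<alpha> powr p * R / (R + \<alpha>\<^sup>2) = (\<Sum>n\<in>UNIV. p / 2 * \<alpha> powr p * (x $ n)\<^sup>2 / (R + \<alpha>\<^sup>2))"
    by (simp add: R_def norm_power2_eq_sum sum_divide_distrib sum_distrib_left)
  also have "\<dots> \<le> (\<Sum>n\<in>UNIV. p / 2 * \<alpha> powr p * (x $ n)\<^sup>2 / ((x $ n)\<^sup>2 + \<alpha>\<^sup>2))"
    using assms le_R \<open>0 \<le> R\<close> by (intro sum_mono divide_left_mono) (auto intro!: mult_pos_pos add_nonneg_pos)
  also have "\<dots> \<le> lp_smooth p \<alpha> x"
    unfolding lp_smooth_eq_sum_lp_term by (intro sum_mono lp_term_ge_rational assms)
  finally show ?thesis by (simp add: R_def)
qed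

lemma sum_abs_powr_le_norm_powr:
  fixes x :: "real^'n"
  assumes "2 \<le> q"
  shows "(\<Sum>n\<in>UNIV. \<bar>x $ n\<bar> powr q) \<le> (norm x)\<^sup>2 * norm x powr (q - 2)"
proof -
  have "(\<Sum>n\<in>UNIV. \<bar>x $ n\<bar> powr q) \<le> (\<Sum>n\<in>UNIV. (x $ n)\<^sup>2 * norm x powr (q - 2))"
    using assms by (intro sum_mono abs_powr_le_power2_mult) (auto simp: component_le_norm_cart)
  also have "\<dots> = (norm x)\<^sup>2 * norm x powr (q - 2)"
    by (simp add: norm_power2_eq_sum sum_distrib_right)
  finally show ?thesis .
qed

text \<open>The right-hand side is \<open>L / (p * (b + L))\<close> for the lower bound
  \<open>L = p / 2 * a * R / (R + s)\<close> of \<open>lp_smooth_ge_rational\<close>, with \<open>a = \<alpha> powr p\<close>,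
  \<open>b = \<beta> powr p\<close>, \<open>s = \<alpha>\<^sup>2\<close> and \<open>R = (norm x)\<^sup>2\<close>.\<close>
lemma rational_ratio_ge_of_le:
  fixes a b s p R E :: real
  assumes "0 < a" "0 < b" "0 < s" "0 < p" "0 < E" "0 \<le> R"
    and small: "R * (b + p / 2 * a) \<le> a * E - b * s"
  shows "R / (2 * E) \<le> (p / 2 * a * R / (R + s)) / (p * (b + p / 2 * a * R / (R + s)))"
proof -
  define L where "L = p / 2 * a * R / (R + s)"
  have "0 < R + s" using assms by simp
  have "0 \<le> L" using assms by (simp add: L_def)
  have "2 * b * (R + s) \<le> a * (2 * E - p * R)"
    using small by (simp add: algebra_simps)
  have "p * R * b = p * R / (2 * (R + s)) * (2 * b * (R + s))"
    using \<open>0 < R + s\<close> by (simp add: field_simps)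
  also have "\<dots> \<le> p * R / (2 * (R + s)) * (a * (2 * E - p * R))"
    using assms \<open>0 < R + s\<close> \<open>2 * b * (R + s) \<le> _\<close> by (intro mult_left_mono) auto
  also have "\<dots> = L * (2 * E - p * R)"
    by (simp add: L_def)
  finally have "p * R * b \<le> L * (2 * E - p * R)" .
  moreover have "0 < p * (b + L)" using assms \<open>0 \<le> L\<close> by simp
  ultimately have "R / (2 * E) \<le> L / (p * (b + L))"
    using assms by (simp add: pos_le_divide_eq pos_divide_le_eq algebra_simps)
  then show ?thesis by (simp add: L_def)
qed

lemma rational_ratio_ge_linear:
  fixes a b s p R :: real
  assumes "0 < a" "0 < b" "0 < s" "0 < p" "0 \<le> R" "R \<le> 1"
  shows "R * (a / (2 * (1 + s) * (b + p / 2 * a / s)))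
           \<le> (p / 2 * a * R / (R + s)) / (p * (b + p / 2 * a * R / (R + s)))"
proof -
  define K where "K = p / 2 * a / s"
  define L where "L = p / 2 * a * R / (R + s)"
  have "0 < K" "0 < R + s" using assms by (auto simp: K_def)
  have "0 \<le> L" using assms by (simp add: L_def)
  have "R * s \<le> R + s"
    using mult_right_mono[of R 1 s] assms by linarith
  then have "R / (R + s) \<le> 1 / s"
    using assms \<open>0 < R + s\<close> by (simp add: divide_simps)
  then have "p / 2 * a * (R / (R + s)) \<le> p / 2 * a * (1 / s)"
    using assms by (intro mult_left_mono) auto
  then have "L \<le> K" by (simp add: L_def K_def)
  have "R * (a / (2 * (1 + s) * (b + K))) = (p / 2 * a * R / (1 + s)) / (p * (b + K))"
    using assms by (simp add: mult_ac)
  also have "\<dots> \<le> L / (p * (b + K))"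
    unfolding L_def using assms \<open>0 < K\<close> \<open>0 < R + s\<close>
    by (intro divide_right_mono divide_left_mono) auto
  also have "\<dots> \<le> L / (p * (b + L))"
    using assms \<open>0 \<le> L\<close> \<open>L \<le> K\<close> by (intro divide_left_mono mult_left_mono mult_pos_pos) auto
  finally show ?thesis by (simp add: K_def L_def)
qed

lemma SPOQ_ge_ln_ratio:
  fixes x :: "real^'n"
  assumes p: "0 < p" "p \<le> 2" and q: "0 < q" and pos: "0 < \<alpha>" "0 < \<beta>" "0 < \<eta>"
    and ratio: "(\<Sum>n\<in>UNIV. \<bar>x $ n\<bar> powr q) / (q * \<eta> powr q)
      \<le> (p / 2 * \<alpha> powr p * (norm x)\<^sup>2 / ((norm x)\<^sup>2 + \<alpha>\<^sup>2))
          / (p * (\<beta> powr p + p / 2 * \<alpha> powr p * (norm x)\<^sup>2 / ((norm x)\<^sup>2 + \<alpha>\<^sup>2)))"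
  shows "ln (\<beta> / \<eta>) \<le> SPOQ p q \<alpha> \<beta> \<eta> x"
proof -
  define L where "L = p / 2 * \<alpha> powr p * (norm x)\<^sup>2 / ((norm x)\<^sup>2 + \<alpha>\<^sup>2)"
  have "0 \<le> L" using p by (simp add: L_def)
  have "L \<le> lp_smooth p \<alpha> x"
    unfolding L_def using p pos by (intro lp_smooth_ge_rational) auto
  have "ln (\<beta> / \<eta>) = ln (\<beta> powr p) / p - ln (\<eta> powr q) / q"
    using assms by (simp add: ln_div ln_powr)
  also have "\<dots> \<le> ln (\<beta> powr p + lp_smooth p \<alpha> x) / p - ln (\<eta> powr q + (\<Sum>n\<in>UNIV. \<bar>x $ n\<bar> powr q)) / q"
  proof (rule ln_div_diff_le)
    have "(\<Sum>n\<in>UNIV. \<bar>x $ n\<bar> powr q) / (q * \<eta> powr q) \<le> L / (p * (\<beta> powr p + L))"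
      using ratio unfolding L_def .
    also have "\<dots> \<le> lp_smooth p \<alpha> x / (p * (\<beta> powr p + lp_smooth p \<alpha> x))"
      using p pos by (intro div_mult_add_self_mono \<open>0 \<le> L\<close> \<open>L \<le> lp_smooth p \<alpha> x\<close>) auto
    finally show "(\<Sum>n\<in>UNIV. \<bar>x $ n\<bar> powr q) / (q * \<eta> powr q) \<le> lp_smooth p \<alpha> x / (p * (\<beta> powr p + lp_smooth p \<alpha> x))" .
  qed (use assms \<open>0 \<le> L\<close> \<open>L \<le> lp_smooth p \<alpha> x\<close> in \<open>auto intro: sum_nonneg\<close>)
  also have "\<dots> = SPOQ p q \<alpha> \<beta> \<eta> x"
    using SPOQ_eq_ln[of p \<alpha> \<beta> \<eta> q x] p pos by (simp add: spoq_num_def spoq_den_def add.commute)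
  finally show ?thesis .
qed

lemma SPOQ_local_min_q2:
  assumes p: "0 < p" "p \<le> 2" and pos: "0 < \<alpha>" "0 < \<beta>" "0 < \<eta>"
    and H: "\<beta> powr p < \<eta>\<^sup>2 * \<alpha> powr (p - 2)"
  shows "\<exists>e>0. \<forall>x::real^'n. norm x < e \<longrightarrow> ln (\<beta> / \<eta>) \<le> SPOQ p 2 \<alpha> \<beta> \<eta> x"
proof -
  define a where "a = \<alpha> powr p"
  define b where "b = \<beta> powr p"
  have "0 < a" "0 < b" using pos by (auto simp: a_def b_def)
  have a: "\<alpha> powr (p - 2) * \<alpha>\<^sup>2 = a"
    using pos powr_add[of \<alpha> "p - 2" 2] by (simp add: a_def powr_numeral)
  have "b * \<alpha>\<^sup>2 < \<eta>\<^sup>2 * \<alpha> powr (p - 2) * \<alpha>\<^sup>2"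
    using H pos by (simp add: b_def)
  also have "\<dots> = \<eta>\<^sup>2 * a" by (simp only: mult.assoc a)
  finally have "b * \<alpha>\<^sup>2 < a * \<eta>\<^sup>2" by (simp only: mult.commute)
  define \<delta> where "\<delta> = (a * \<eta>\<^sup>2 - b * \<alpha>\<^sup>2) / (b + p / 2 * a)"
  have den: "0 < b + p / 2 * a" using \<open>0 < a\<close> \<open>0 < b\<close> p by (simp add: add_pos_pos)
  have "0 < \<delta>" using \<open>b * \<alpha>\<^sup>2 < a * \<eta>\<^sup>2\<close> den by (simp add: \<delta>_def)
  show ?thesis
  proof (intro exI[of _ "sqrt \<delta>"] conjI allI impI)
    show "0 < sqrt \<delta>" using \<open>0 < \<delta>\<close> by simp
    fix x :: "real^'n"
    assume "norm x < sqrt \<delta>"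
    then have "(norm x)\<^sup>2 < (sqrt \<delta>)\<^sup>2" by (intro power_strict_mono) auto
    then have "(norm x)\<^sup>2 * (b + p / 2 * a) \<le> a * \<eta>\<^sup>2 - b * \<alpha>\<^sup>2"
      using \<open>0 < \<delta>\<close> den by (simp add: \<delta>_def pos_less_divide_eq less_imp_le)
    then have "(norm x)\<^sup>2 / (2 * \<eta>\<^sup>2)
        \<le> (p / 2 * a * (norm x)\<^sup>2 / ((norm x)\<^sup>2 + \<alpha>\<^sup>2)) / (p * (b + p / 2 * a * (norm x)\<^sup>2 / ((norm x)\<^sup>2 + \<alpha>\<^sup>2)))"
      using \<open>0 < a\<close> \<open>0 < b\<close> p pos by (intro rational_ratio_ge_of_le) auto
    then show "ln (\<beta> / \<eta>) \<le> SPOQ p 2 \<alpha> \<beta> \<eta> x"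
      using p pos by (intro SPOQ_ge_ln_ratio) (simp_all add: a_def b_def norm_power2_eq_sum powr_numeral)
  qed
qed

lemma SPOQ_local_min_q_gt2:
  assumes p: "0 < p" "p \<le> 2" and q: "2 < q" and pos: "0 < \<alpha>" "0 < \<beta>" "0 < \<eta>"
  shows "\<exists>e>0. \<forall>x::real^'n. norm x < e \<longrightarrow> ln (\<beta> / \<eta>) \<le> SPOQ p q \<alpha> \<beta> \<eta> x"
proof -
  define a where "a = \<alpha> powr p"
  define b where "b = \<beta> powr p"
  define C where "C = a / (2 * (1 + \<alpha>\<^sup>2) * (b + p / 2 * a / \<alpha>\<^sup>2))"
  have "0 < a" "0 < b" using pos by (auto simp: a_def b_def)
  then have "0 < C" using p pos by (auto simp: C_def add_pos_pos)
  define e where "e = min 1 ((q * \<eta> powr q * C) powr (1 / (q - 2)))"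
  show ?thesis
  proof (intro exI[of _ e] conjI allI impI)
    show "0 < e" using q pos \<open>0 < C\<close> by (simp add: e_def)
    fix x :: "real^'n"
    assume "norm x < e"
    then have "norm x \<le> 1" by (simp add: e_def)
    have "norm x powr (q - 2) \<le> ((q * \<eta> powr q * C) powr (1 / (q - 2))) powr (q - 2)"
      using \<open>norm x < e\<close> q by (intro powr_mono2) (auto simp: e_def)
    also have "\<dots> = q * \<eta> powr q * C" using q pos \<open>0 < C\<close> by (simp add: powr_powr)
    finally have "(norm x)\<^sup>2 * norm x powr (q - 2) \<le> (norm x)\<^sup>2 * (q * \<eta> powr q * C)"
      by (simp add: mult_left_mono)
    then have "(\<Sum>n\<in>UNIV. \<bar>x $ n\<bar> powr q) / (q * \<eta> powr q) \<le> (norm x)\<^sup>2 * C"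
      using sum_abs_powr_le_norm_powr[of q x] q pos by (simp add: pos_divide_le_eq mult_ac)
    also have "\<dots> \<le> (p / 2 * a * (norm x)\<^sup>2 / ((norm x)\<^sup>2 + \<alpha>\<^sup>2))
                      / (p * (b + p / 2 * a * (norm x)\<^sup>2 / ((norm x)\<^sup>2 + \<alpha>\<^sup>2)))"
      unfolding C_def using \<open>0 < a\<close> \<open>0 < b\<close> p pos \<open>norm x \<le> 1\<close>
      by (intro rational_ratio_ge_linear) (auto simp: power_le_one)
    finally show "ln (\<beta> / \<eta>) \<le> SPOQ p q \<alpha> \<beta> \<eta> x"
      using p q pos by (intro SPOQ_ge_ln_ratio) (simp_all add: a_def b_def)
  qed
qed

section \<open>Gradient and Hessian at the origin\<close>

definition lp_weight :: "real \<Rightarrow> real \<Rightarrow> real \<Rightarrow> real" where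
  "lp_weight p \<alpha> t = (t\<^sup>2 + \<alpha>\<^sup>2) powr (p / 2 - 1)"

definition signed_pow :: "real \<Rightarrow> real \<Rightarrow> real" where
  "signed_pow q t = t * \<bar>t\<bar> powr (q - 2)"

definition spoq_partial :: "real \<Rightarrow> real \<Rightarrow> real \<Rightarrow> real \<Rightarrow> real \<Rightarrow> 'n \<Rightarrow> real^'n \<Rightarrow> real" where
  "spoq_partial p q \<alpha> \<beta> \<eta> j x =
     x $ j * lp_weight p \<alpha> (x $ j) / spoq_num p \<alpha> \<beta> x - signed_pow q (x $ j) / spoq_den q \<eta> x"

lemma has_derivative_vec_nth_comp:
  assumes "(f has_real_derivative D) (at (x $ n))"
  shows "((\<lambda>y::real^'n. f (y $ n)) has_derivative (\<lambda>v. v $ n * D)) (at x)"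
  using DERIV_compose_FDERIV[OF assms bounded_linear_imp_has_derivative[OF bounded_linear_vec_nth]] .

lemma lp_term_has_real_derivative:
  assumes "0 < \<alpha>"
  shows "(lp_term p \<alpha> has_real_derivative p * t * lp_weight p \<alpha> t) (at t)"
proof -
  have "0 < t\<^sup>2 + \<alpha>\<^sup>2" using assms by (simp add: add_nonneg_pos)
  then have "((\<lambda>t. (t\<^sup>2 + \<alpha>\<^sup>2) powr (p / 2) - \<alpha> powr p) has_real_derivative
               p / 2 * (t\<^sup>2 + \<alpha>\<^sup>2) powr (p / 2 - 1) * (2 * t)) (at t)"
    by (auto intro!: derivative_eq_intros simp: power2_eq_square algebra_simps)
  then show ?thesis unfolding lp_term_def[abs_def] lp_weight_def by (simp add: algebra_simps)
qed

lemma lp_weight_real_differentiable: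
  assumes "0 < \<alpha>"
  shows "\<exists>D. (lp_weight p \<alpha> has_real_derivative D) (at t)"
proof -
  have "0 < t\<^sup>2 + \<alpha>\<^sup>2" using assms by (simp add: add_nonneg_pos)
  show ?thesis unfolding lp_weight_def[abs_def]
    by (rule exI, rule derivative_intros) (use \<open>0 < t\<^sup>2 + \<alpha>\<^sup>2\<close> in \<open>auto intro!: derivative_intros\<close>)
qed

lemma lp_weight_zero: "0 < \<alpha> \<Longrightarrow> lp_weight p \<alpha> 0 = \<alpha> powr (p - 2)"
  by (simp add: lp_weight_def power2_powr algebra_simps)

lemma tendsto_abs_powr_zero:
  assumes "0 < e"
  shows "((\<lambda>h::real. \<bar>h\<bar> powr e) \<longlongrightarrow> 0) (at 0)"
  by (rule tendsto_zero_powrI) (use assms tendsto_rabs_zero[OF tendsto_ident_at] in auto)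

lemma abs_powr_has_real_derivative:
  assumes "1 < q"
  shows "((\<lambda>t. \<bar>t\<bar> powr q) has_real_derivative q * signed_pow q t) (at t)"
proof (cases "t = 0")
  case True
  have quotient: "(\<lambda>h. (\<bar>0 + h\<bar> powr q - \<bar>0\<bar> powr q) / h) = (\<lambda>h. sgn h * \<bar>h\<bar> powr (q - 1))"
  proof
    fix h :: real
    show "(\<bar>0 + h\<bar> powr q - \<bar>0\<bar> powr q) / h = sgn h * \<bar>h\<bar> powr (q - 1)"
    proof (cases "h = 0")
      case False
      then have "\<bar>h\<bar> powr q = \<bar>h\<bar> * \<bar>h\<bar> powr (q - 1)" using powr_add[of "\<bar>h\<bar>" 1 "q - 1"] by simp
      then show ?thesis using False assms by (simp add: sgn_if)
    qed simp
  qed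
  have "((\<lambda>h. sgn h * \<bar>h\<bar> powr (q - 1)) \<longlongrightarrow> 0) (at (0::real))"
  proof (rule tendsto_norm_zero_cancel)
    have "\<forall>\<^sub>F h in at (0::real). \<bar>h\<bar> powr (q - 1) = norm (sgn h * \<bar>h\<bar> powr (q - 1))"
      by (auto simp: eventually_at_filter abs_mult)
    with tendsto_abs_powr_zero[of "q - 1"] assms
    show "((\<lambda>h. norm (sgn h * \<bar>h\<bar> powr (q - 1))) \<longlongrightarrow> 0) (at 0)"
      by (auto elim: Lim_transform_eventually)
  qed
  then have "((\<lambda>t. \<bar>t\<bar> powr q) has_real_derivative 0) (at 0)" unfolding DERIV_def quotient .
  then show ?thesis using True by (simp add: signed_pow_def)
next
  case False
  have "(\<lambda>t::real. \<bar>t\<bar> powr q) = (\<lambda>t. (t\<^sup>2) powr (q / 2))" by (simp add: abs_powr_eq_power2_powr)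
  moreover have "0 < t\<^sup>2" using False by simp
  then have "((\<lambda>t. (t\<^sup>2) powr (q / 2)) has_real_derivative q / 2 * (t\<^sup>2) powr (q / 2 - 1) * (2 * t)) (at t)"
    by (auto intro!: derivative_eq_intros simp: power2_eq_square algebra_simps)
  moreover have "(t\<^sup>2) powr (q / 2 - 1) = \<bar>t\<bar> powr (q - 2)"
    using abs_powr_eq_power2_powr[of t "q - 2"] by (simp add: diff_divide_distrib)
  ultimately show ?thesis by (simp add: signed_pow_def algebra_simps)
qed

lemma signed_pow_has_real_derivative_zero:
  assumes "2 \<le> q"
  shows "(signed_pow q has_real_derivative (if q = 2 then 1 else 0)) (at 0)"
proof (cases "q = 2")
  case True
  then have "signed_pow q = (\<lambda>t. t)" by (auto simp: signed_pow_def)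
  then show ?thesis using True by simp
next
  case False
  have "(\<lambda>h. (signed_pow q (0 + h) - signed_pow q 0) / h) = (\<lambda>h. \<bar>h\<bar> powr (q - 2))"
    by (auto simp: signed_pow_def)
  then show ?thesis
    using False assms tendsto_abs_powr_zero[of "q - 2"] by (simp add: DERIV_def)
qed

lemma spoq_num_has_derivative:
  assumes "0 < \<alpha>"
  shows "(spoq_num p \<alpha> \<beta> has_derivative (\<lambda>v. \<Sum>n\<in>UNIV. v $ n * (p * x $ n * lp_weight p \<alpha> (x $ n)))) (at x)"
proof -
  have "((\<lambda>x. (\<Sum>n\<in>UNIV. lp_term p \<alpha> (x $ n)) + \<beta> powr p) has_derivative
      (\<lambda>v. (\<Sum>n\<in>UNIV. v $ n * (p * x $ n * lp_weight p \<alpha> (x $ n))) + 0)) (at x)"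
    by (intro has_derivative_add has_derivative_const has_derivative_sum
          has_derivative_vec_nth_comp lp_term_has_real_derivative assms)
  then show ?thesis by (simp add: spoq_num_def[abs_def] lp_smooth_eq_sum_lp_term)
qed

lemma spoq_den_has_derivative:
  assumes "1 < q"
  shows "(spoq_den q \<eta> has_derivative (\<lambda>v. \<Sum>n\<in>UNIV. v $ n * (q * signed_pow q (x $ n)))) (at x)"
proof -
  have "(spoq_den q \<eta> has_derivative (\<lambda>v. 0 + (\<Sum>n\<in>UNIV. v $ n * (q * signed_pow q (x $ n))))) (at x)"
    unfolding spoq_den_def[abs_def]
    by (intro has_derivative_add has_derivative_const has_derivative_sum
          has_derivative_vec_nth_comp abs_powr_has_real_derivative assms)
  then show ?thesis by simp
qed

lemma SPOQ_has_derivative: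
  fixes x :: "real^'n"
  assumes p: "0 < p" and q: "1 < q" and pos: "0 < \<alpha>" "0 < \<beta>" "0 < \<eta>"
  shows "(SPOQ p q \<alpha> \<beta> \<eta> has_derivative (\<lambda>v. \<Sum>n\<in>UNIV. v $ n * spoq_partial p q \<alpha> \<beta> \<eta> n x)) (at x)"
proof -
  have eq: "SPOQ p q \<alpha> \<beta> \<eta> = (\<lambda>x. ln (spoq_num p \<alpha> \<beta> x) * inverse p - ln (spoq_den q \<eta> x) * inverse q)"
    using SPOQ_eq_ln[of p \<alpha> \<beta> \<eta> q] p pos by (auto simp: divide_inverse)
  have deriv: "((\<lambda>x. ln (spoq_num p \<alpha> \<beta> x) * inverse p - ln (spoq_den q \<eta> x) * inverse q) has_derivative
      (\<lambda>v. (\<Sum>n\<in>UNIV. v $ n * (p * x $ n * lp_weight p \<alpha> (x $ n))) * inverse (spoq_num p \<alpha> \<beta> x) * inverse p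
         - (\<Sum>n\<in>UNIV. v $ n * (q * signed_pow q (x $ n))) * inverse (spoq_den q \<eta> x) * inverse q)) (at x)"
    using spoq_num_pos[of p \<alpha> \<beta> x] spoq_den_pos[of \<eta> q x] p pos
    by (intro has_derivative_diff has_derivative_mult_left has_derivative_ln
          spoq_num_has_derivative spoq_den_has_derivative q) auto
  have rhs: "(\<lambda>v. (\<Sum>n\<in>UNIV. v $ n * (p * x $ n * lp_weight p \<alpha> (x $ n))) * inverse (spoq_num p \<alpha> \<beta> x) * inverse p
         - (\<Sum>n\<in>UNIV. v $ n * (q * signed_pow q (x $ n))) * inverse (spoq_den q \<eta> x) * inverse q)
      = (\<lambda>v. \<Sum>n\<in>UNIV. v $ n * spoq_partial p q \<alpha> \<beta> \<eta> n x)"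
  proof
    fix v :: "real^'n"
    have "(\<Sum>n\<in>UNIV. v $ n * (p * x $ n * lp_weight p \<alpha> (x $ n))) * inverse (spoq_num p \<alpha> \<beta> x) * inverse p
            = (\<Sum>n\<in>UNIV. v $ n * (x $ n * lp_weight p \<alpha> (x $ n) / spoq_num p \<alpha> \<beta> x))"
      unfolding sum_distrib_right using p by (intro sum.cong) (auto simp: field_simps)
    moreover have "(\<Sum>n\<in>UNIV. v $ n * (q * signed_pow q (x $ n))) * inverse (spoq_den q \<eta> x) * inverse q
            = (\<Sum>n\<in>UNIV. v $ n * (signed_pow q (x $ n) / spoq_den q \<eta> x))"
      unfolding sum_distrib_right using q by (intro sum.cong) (auto simp: field_simps)
    ultimately show "(\<Sum>n\<in>UNIV. v $ n * (p * x $ n * lp_weight p \<alpha> (x $ n))) * inverse (spoq_num p \<alpha> \<beta> x) * inverse p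
         - (\<Sum>n\<in>UNIV. v $ n * (q * signed_pow q (x $ n))) * inverse (spoq_den q \<eta> x) * inverse q
         = (\<Sum>n\<in>UNIV. v $ n * spoq_partial p q \<alpha> \<beta> \<eta> n x)"
      by (simp add: spoq_partial_def right_diff_distrib sum_subtractf)
  qed
  show ?thesis unfolding eq by (rule has_derivative_eq_rhs[OF deriv rhs])
qed

lemma partial_deriv_SPOQ:
  assumes "0 < p" "1 < q" "0 < \<alpha>" "0 < \<beta>" "0 < \<eta>"
  shows "partial_deriv (SPOQ p q \<alpha> \<beta> \<eta> :: real^'n \<Rightarrow> real) j = spoq_partial p q \<alpha> \<beta> \<eta> j"
proof
  fix y :: "real^'n"
  have "partial_deriv (SPOQ p q \<alpha> \<beta> \<eta>) j y = (\<Sum>n\<in>UNIV. axis j 1 $ n * spoq_partial p q \<alpha> \<beta> \<eta> n y)"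
    unfolding partial_deriv_def frechet_derivative_at[OF SPOQ_has_derivative[OF assms], symmetric] ..
  also have "\<dots> = (\<Sum>n\<in>UNIV. if n = j then spoq_partial p q \<alpha> \<beta> \<eta> n y else 0)"
    by (intro sum.cong) (auto simp: axis_def)
  also have "\<dots> = spoq_partial p q \<alpha> \<beta> \<eta> j y" by simp
  finally show "partial_deriv (SPOQ p q \<alpha> \<beta> \<eta>) j y = spoq_partial p q \<alpha> \<beta> \<eta> j y" .
qed

lemma spoq_partial_has_derivative_zero:
  assumes p: "0 < p" and q: "2 \<le> q" and pos: "0 < \<alpha>" "0 < \<beta>" "0 < \<eta>"
  shows "(spoq_partial p q \<alpha> \<beta> \<eta> j has_derivative
           (\<lambda>h. h $ j * (\<alpha> powr (p - 2) / \<beta> powr p - (if q = 2 then 1 / \<eta>\<^sup>2 else 0)))) (at (0::real^'n))"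
proof -
  obtain Dw where "(lp_weight p \<alpha> has_real_derivative Dw) (at 0)"
    using lp_weight_real_differentiable[OF pos(1)] by blast
  then have weight: "((\<lambda>y::real^'n. lp_weight p \<alpha> (y $ j)) has_derivative (\<lambda>h. h $ j * Dw)) (at 0)"
    by (intro has_derivative_vec_nth_comp) simp
  have pow: "((\<lambda>y::real^'n. signed_pow q (y $ j)) has_derivative (\<lambda>h. h $ j * (if q = 2 then 1 else 0))) (at 0)"
    using signed_pow_has_real_derivative_zero[OF q] by (intro has_derivative_vec_nth_comp) simp
  have coord: "((\<lambda>y::real^'n. y $ j) has_derivative (\<lambda>h. h $ j)) (at 0)"
    by (rule bounded_linear_imp_has_derivative[OF bounded_linear_vec_nth])
  have num: "spoq_num p \<alpha> \<beta> (0::real^'n) \<noteq> 0" and den: "spoq_den q \<eta> (0::real^'n) \<noteq> 0"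
    using spoq_num_pos[of p \<alpha> \<beta> "0::real^'n"] spoq_den_pos[of \<eta> q "0::real^'n"] p pos by auto
  note deriv = has_derivative_diff[OF
      has_derivative_divide[OF has_derivative_mult[OF coord weight] spoq_num_has_derivative[OF pos(1)] num]
      has_derivative_divide[OF pow spoq_den_has_derivative den]]
  show ?thesis
    unfolding spoq_partial_def[abs_def]
    by (rule has_derivative_eq_rhs[OF deriv])
       (use q pos in \<open>auto simp: spoq_num_def spoq_den_def signed_pow_def lp_weight_zero powr_numeral right_diff_distrib\<close>)
qed

lemma hessian_SPOQ_zero:
  assumes "0 < p" "2 \<le> q" "0 < \<alpha>" "0 < \<beta>" "0 < \<eta>"
  shows "hessian (SPOQ p q \<alpha> \<beta> \<eta> :: real^'n \<Rightarrow> real) 0 =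
           mat (\<alpha> powr (p - 2) / \<beta> powr p - (if q = 2 then 1 / \<eta>\<^sup>2 else 0))"
proof -
  have "1 < q" using assms by simp
  then show ?thesis
    unfolding hessian_def partial_deriv_SPOQ[OF assms(1) \<open>1 < q\<close> assms(3-5)]
      frechet_derivative_at[OF spoq_partial_has_derivative_zero[OF assms], symmetric]
    by (simp add: mat_def axis_def vec_eq_iff)
qed

lemma pos_def_matrix_mat:
  assumes "0 < c"
  shows "pos_def_matrix (mat c :: real^'n^'n)"
  unfolding pos_def_matrix_def
proof (intro conjI allI impI)
  show "transpose (mat c) = (mat c :: real^'n^'n)" by simp
  fix v :: "real^'n"
  assume "v \<noteq> 0"
  have "(\<Sum>j\<in>UNIV. (if i = j then c else 0) * v $ j) = c * v $ i" for i
    by (simp add: if_distrib[of "\<lambda>x. x * _"] cong: if_cong)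
  then have "mat c *v v = c *\<^sub>R v"
    by (simp add: mat_def matrix_vector_mult_def vec_eq_iff)
  then show "0 < v \<bullet> (mat c *v v)" using assms \<open>v \<noteq> 0\<close> by simp
qed

lemma SPOQ_twice_differentiable_at_zero:
  assumes "0 < p" "2 \<le> q" "0 < \<alpha>" "0 < \<beta>" "0 < \<eta>"
  shows "twice_differentiable_at (SPOQ p q \<alpha> \<beta> \<eta> :: real^'n \<Rightarrow> real) 0"
proof -
  have "1 < q" using assms by simp
  have "SPOQ p q \<alpha> \<beta> \<eta> differentiable (at y)" for y :: "real^'n"
    using SPOQ_has_derivative[OF assms(1) \<open>1 < q\<close> assms(3-5)] by (rule differentiableI)
  moreover have "spoq_partial p q \<alpha> \<beta> \<eta> j differentiable (at (0::real^'n))" for j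
    using spoq_partial_has_derivative_zero[OF assms] by (rule differentiableI)
  ultimately show ?thesis
    unfolding twice_differentiable_at_def partial_deriv_SPOQ[OF assms(1) \<open>1 < q\<close> assms(3-5)]
    by (auto intro: exI[of _ 1])
qed

lemma SPOQ_hessian_zero_pos_def:
  assumes "0 < p" "2 \<le> q" "0 < \<alpha>" "0 < \<beta>" "0 < \<eta>"
    and H: "(q = 2 \<and> \<eta>\<^sup>2 * \<alpha> powr (p - 2) > \<beta> powr p) \<or> q > 2"
  shows "pos_def_matrix (hessian (SPOQ p q \<alpha> \<beta> \<eta> :: real^'n \<Rightarrow> real) 0)"
  unfolding hessian_SPOQ_zero[OF assms(1-5)]
proof (rule pos_def_matrix_mat)
  show "0 < \<alpha> powr (p - 2) / \<beta> powr p - (if q = 2 then 1 / \<eta>\<^sup>2 else 0)"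
    using H assms(3-5) by (auto simp: field_simps)
qed

theorem proposition1:
  fixes p q \<alpha> \<beta> \<eta> :: real
  assumes "0 < p" "p < 2" "2 \<le> q"
    and "0 < \<alpha>" "0 < \<beta>" "0 < \<eta>"
    and "(q = 2 \<and> \<eta>\<^sup>2 * \<alpha> powr (p - 2) > \<beta> powr p) \<or> q > 2"
  shows "twice_differentiable_at (SPOQ p q \<alpha> \<beta> \<eta> :: real^'n \<Rightarrow> real) 0
    \<and> pos_def_matrix (hessian (SPOQ p q \<alpha> \<beta> \<eta> :: real^'n \<Rightarrow> real) 0)
    \<and> (\<exists>e>0. \<forall>x::real^'n. norm x < e \<longrightarrow> SPOQ p q \<alpha> \<beta> \<eta> 0 \<le> SPOQ p q \<alpha> \<beta> \<eta> x)
    \<and> (\<eta>\<^sup>2 \<ge> \<beta>\<^sup>2 * max (8 * \<alpha> powr (2 - p) / (p * (2 + p) * \<beta> powr (2 - p)))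
                         (1 / (2 powr (p / 2) - 1) powr (2 / p))
       \<longrightarrow> (\<forall>x::real^'n. SPOQ p q \<alpha> \<beta> \<eta> 0 \<le> SPOQ p q \<alpha> \<beta> \<eta> x))"
proof -
  note pos = assms(4-6)
  have "p \<le> 2" "0 < q" using assms(2,3) by auto
  have local: "\<exists>e>0. \<forall>x::real^'n. norm x < e \<longrightarrow> ln (\<beta> / \<eta>) \<le> SPOQ p q \<alpha> \<beta> \<eta> x"
    using assms(7) SPOQ_local_min_q2[OF assms(1) \<open>p \<le> 2\<close> pos] SPOQ_local_min_q_gt2[OF assms(1) \<open>p \<le> 2\<close> _ pos]
    by auto
  \<comment> \<open>The \<open>0\<close> in the statement is typed independently of \<open>x\<close>; \<open>SPOQ_zero\<close> holds in every dimension.\<close>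
  show ?thesis
    unfolding SPOQ_zero[OF assms(1) \<open>0 < q\<close> pos]
    using SPOQ_twice_differentiable_at_zero[OF assms(1,3) pos]
      SPOQ_hessian_zero_pos_def[OF assms(1,3) pos assms(7)] local
      SPOQ_global_min[OF assms(1) \<open>p \<le> 2\<close> assms(3) pos]
    by blast
qed

end
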